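(* Let $q>0$ with $q\ne 1$, let $t\ge 0$, and set $$A=\begin{pmatrix} q & \sqrt t\\ 0 & -1\end{pmatrix},\qquad B=\begin{pmatrix} q & 0\\ -\sqrt t & -1\end{pmatrix}.$$ Then $$\|AB-qBA\|_F^2=t^2(1+q^2)+2t(1+q)(1+q^3)+(1-q)^2(1+q^4).$$ Let $f(t)=\|AB-qBA\|_F^2/(\|A\|_F^2\|B\|_F^2)$. On $t\ge 0$, $f$ attains its maximum at $t_{\max}=\frac{3q^4+2q^2+3}{(1-q)^2}$, where $$f(t_{\max})=\frac{1-h(q)x(q)}{1-x(q)}\,(1+q^2),\qquad x(q)=\frac{q(1-q)^2}{2(1+q^4)},\quad h(q)=\frac{(1+q)^2}{2(1+q^2)}.$$ Moreover $f(t_{\max})>1+q^2$. Consequently, for every $q>0$ with $q\neq 1$, there exist $A,B\in M_2(\mathbb{C})$ with $\|AB-qBA\|_F^2>(1+q^2)\|A\|_F^2\|B\|_F^2$.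
   Context: $\|X\|_F=\sqrt{\operatorname{tr}(XX^\dagger)}$ denotes the Frobenius norm. *)

theory Defs
  imports "HOL-Analysis.Analysis"
begin

definition conj_transpose :: "complex^'n^'n \<Rightarrow> complex^'n^'n" where
  "conj_transpose X = (\<chi> i j. cnj (X $ j $ i))"

definition frob_norm :: "complex^'n^'n \<Rightarrow> real" where
  "frob_norm X = sqrt (Re (trace (X ** conj_transpose X)))"

definition matA :: "real \<Rightarrow> real \<Rightarrow> complex^2^2" where
  "matA q t = vector [vector [complex_of_real q, complex_of_real (sqrt t)],
                      vector [0, -1]]"

definition matB :: "real \<Rightarrow> real \<Rightarrow> complex^2^2" where
  "matB q t = vector [vector [complex_of_real q, 0],
                      vector [- complex_of_real (sqrt t), -1]]"

definition qcomm :: "real \<Rightarrow> complex^'n^'n \<Rightarrow> complex^'n^'n \<Rightarrow> complex^'n^'n" where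
  "qcomm q A B = A ** B - q *\<^sub>R (B ** A)"

definition ratio_f :: "real \<Rightarrow> real \<Rightarrow> real" where
  "ratio_f q t = (frob_norm (qcomm q (matA q t) (matB q t)))\<^sup>2 /
                 ((frob_norm (matA q t))\<^sup>2 * (frob_norm (matB q t))\<^sup>2)"

end

theory Submission
  imports Defs
begin

text \<open>
  Both squared Frobenius norms of A and B equal u = 1 + q^2 + t, while the squared norm of
  AB - qBA equals (1 + q^2) u^2 + 2q(1 - q)^2 u - 2q P(q) with P(q) = 2 - q + 2q^2 - q^3 + 2q^4,
  a polynomial without real zeros. So in s = 1/u the ratio f is the concave quadratic
  1 + q^2 + 2q(1 - q)^2 s - 2q P(q) s^2. Its vertex s = (1 - q)^2 / (2 P(q)) is attained at
  t = t_max and yields the maximum 1 + q^2 + q(1 - q)^4 / (2 P(q)), which exceeds 1 + q^2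
  exactly when q \<noteq> 1.
\<close>

lemma frob_norm_power2:
  "(frob_norm (X::complex^'n^'n))\<^sup>2 = (\<Sum>i\<in>UNIV. \<Sum>j\<in>UNIV. (cmod (X$i$j))\<^sup>2)"
proof -
  have "Re (trace (X ** conj_transpose X)) = (\<Sum>i\<in>UNIV. \<Sum>j\<in>UNIV. (cmod (X$i$j))\<^sup>2)"
    by (simp add: trace_def matrix_matrix_mult_def conj_transpose_def flip: complex_norm_square)
  moreover have "0 \<le> (\<Sum>i\<in>UNIV. \<Sum>j\<in>UNIV. (cmod (X$i$j))\<^sup>2)"
    by (intro sum_nonneg) simp
  ultimately show ?thesis by (simp add: frob_norm_def)
qed

lemma frob_norm_power2_2x2:
  "(frob_norm (X::complex^2^2))\<^sup>2 = (cmod (X$1$1))\<^sup>2 + (cmod (X$1$2))\<^sup>2 + (cmod (X$2$1))\<^sup>2 + (cmod (X$2$2))\<^sup>2"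
  by (simp add: frob_norm_power2 sum_2)

lemma frob_norm_matA_power2: "t \<ge> 0 \<Longrightarrow> (frob_norm (matA q t))\<^sup>2 = 1 + q\<^sup>2 + t"
  by (simp add: frob_norm_power2_2x2 matA_def norm_of_real)

lemma frob_norm_matB_power2: "t \<ge> 0 \<Longrightarrow> (frob_norm (matB q t))\<^sup>2 = 1 + q\<^sup>2 + t"
  by (simp add: frob_norm_power2_2x2 matB_def norm_of_real)

lemma frob_norm_qcomm_matA_matB_power2:
  assumes "t \<ge> 0"
  shows "(frob_norm (qcomm q (matA q t) (matB q t)))\<^sup>2 =
    t\<^sup>2 * (1 + q\<^sup>2) + 2 * t * (1 + q) * (1 + q ^ 3) + (1 - q)\<^sup>2 * (1 + q ^ 4)"
proof -
  have s: "sqrt t * sqrt t = t" using assms by simp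
  have "(frob_norm (qcomm q (matA q t) (matB q t)))\<^sup>2
      = (q\<^sup>2 - t - q ^ 3)\<^sup>2 + 2 * ((1 + q\<^sup>2) * sqrt t)\<^sup>2 + (1 - q + q * t)\<^sup>2"
    using assms
    by (simp add: frob_norm_power2_2x2 qcomm_def matA_def matB_def matrix_matrix_mult_def
        sum_2 cmod_power2)
      (simp add: power2_eq_square power3_eq_cube algebra_simps s)
  also have "\<dots> = t\<^sup>2 * (1 + q\<^sup>2) + 2 * t * (1 + q) * (1 + q ^ 3) + (1 - q)\<^sup>2 * (1 + q ^ 4)"
    using assms by (simp add: eval_nat_numeral algebra_simps)
  finally show ?thesis .
qed

definition peak_poly :: "real \<Rightarrow> real" where
  "peak_poly q = 2 - q + 2 * q ^ 2 - q ^ 3 + 2 * q ^ 4"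

lemma peak_poly_pos: "peak_poly q > 0"
proof -
  have "peak_poly q = 2 * (q\<^sup>2 - q / 4)\<^sup>2 + 15 / 8 * (q - 4 / 15)\<^sup>2 + 28 / 15"
    by (simp add: peak_poly_def power2_eq_square power3_eq_cube eval_nat_numeral algebra_simps)
  moreover have "0 \<le> 2 * (q\<^sup>2 - q / 4)\<^sup>2 + 15 / 8 * (q - 4 / 15)\<^sup>2" by simp
  ultimately show ?thesis by linarith
qed

lemma qcomm_poly_shifted:
  "(t::real)\<^sup>2 * (1 + q\<^sup>2) + 2 * t * (1 + q) * (1 + q ^ 3) + (1 - q)\<^sup>2 * (1 + q ^ 4)
    = (1 + q\<^sup>2) * (1 + q\<^sup>2 + t)\<^sup>2 + 2 * q * (1 - q)\<^sup>2 * (1 + q\<^sup>2 + t) - 2 * q * peak_poly q"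
  by (simp add: peak_poly_def algebra_simps eval_nat_numeral)

lemma ratio_f_eq:
  assumes "t \<ge> 0" and s: "s = 1 / (1 + q\<^sup>2 + t)"
  shows "ratio_f q t = 1 + q\<^sup>2 + 2 * q * (1 - q)\<^sup>2 * s - 2 * q * peak_poly q * s\<^sup>2"
proof -
  define u where "u = 1 + q\<^sup>2 + t"
  have u: "u \<noteq> 0" using assms(1) unfolding u_def by (simp add: add_pos_nonneg less_imp_neq[symmetric])
  have "ratio_f q t = ((1 + q\<^sup>2) * u\<^sup>2 + 2 * q * (1 - q)\<^sup>2 * u - 2 * q * peak_poly q) / u\<^sup>2"
    unfolding ratio_f_def frob_norm_matA_power2[OF assms(1)] frob_norm_matB_power2[OF assms(1)]
      frob_norm_qcomm_matA_matB_power2[OF assms(1)] qcomm_poly_shifted u_def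
    by (simp add: power2_eq_square)
  also have "\<dots> = 1 + q\<^sup>2 + 2 * q * (1 - q)\<^sup>2 * s - 2 * q * peak_poly q * s\<^sup>2"
    unfolding s u_def[symmetric] using u by (simp add: field_simps power2_eq_square)
  finally show ?thesis .
qed

lemma quadratic_le_vertex:
  fixes a c s :: real
  assumes "a > 0"
  shows "c * s - a * s\<^sup>2 \<le> c\<^sup>2 / (4 * a)"
proof -
  have "c\<^sup>2 / (4 * a) - (c * s - a * s\<^sup>2) = (2 * a * s - c)\<^sup>2 / (4 * a)"
    using assms by (simp add: field_simps power2_eq_square)
  moreover have "(2 * a * s - c)\<^sup>2 / (4 * a) \<ge> 0" using assms by simp
  ultimately show ?thesis by linarith
qed

lemma quadratic_at_vertex:
  fixes a c :: real
  assumes "a \<noteq> 0"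
  shows "c * (c / (2 * a)) - a * (c / (2 * a))\<^sup>2 = c\<^sup>2 / (4 * a)"
  using assms by (simp add: field_simps power2_eq_square)

lemma ratio_f_le_peak:
  assumes "q > 0" and "t \<ge> 0"
  shows "ratio_f q t \<le> 1 + q\<^sup>2 + q * (1 - q) ^ 4 / (2 * peak_poly q)"
proof -
  define s where "s = 1 / (1 + q\<^sup>2 + t)"
  have a: "2 * q * peak_poly q > 0" using assms peak_poly_pos by simp
  have "ratio_f q t = 1 + q\<^sup>2 + ((2 * q * (1 - q)\<^sup>2) * s - (2 * q * peak_poly q) * s\<^sup>2)"
    using ratio_f_eq[OF assms(2) s_def] by simp
  also have "\<dots> \<le> 1 + q\<^sup>2 + (2 * q * (1 - q)\<^sup>2)\<^sup>2 / (4 * (2 * q * peak_poly q))"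
    using quadratic_le_vertex[OF a] by simp
  also have "\<dots> = 1 + q\<^sup>2 + q * (1 - q) ^ 4 / (2 * peak_poly q)"
    using assms(1) by (simp add: power_mult_distrib flip: power_mult) (simp add: power2_eq_square)
  finally show ?thesis .
qed

lemma ratio_f_at_peak:
  assumes "q \<noteq> 0" and "q \<noteq> 1"
  shows "ratio_f q ((3 * q ^ 4 + 2 * q\<^sup>2 + 3) / (1 - q)\<^sup>2)
    = 1 + q\<^sup>2 + q * (1 - q) ^ 4 / (2 * peak_poly q)"
proof -
  define tmax where "tmax = (3 * q ^ 4 + 2 * q\<^sup>2 + 3) / (1 - q)\<^sup>2"
  define s where "s = 1 / (1 + q\<^sup>2 + tmax)"
  have a: "2 * q * peak_poly q \<noteq> 0" using assms(1) peak_poly_pos by (simp add: less_le)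
  have t: "tmax \<ge> 0" unfolding tmax_def by simp
  have sq: "(1 - q)\<^sup>2 \<noteq> 0" using assms(2) by simp
  have "1 + q\<^sup>2 + tmax = 2 * peak_poly q / (1 - q)\<^sup>2"
    unfolding tmax_def peak_poly_def using sq by (simp add: field_simps eval_nat_numeral)
  then have vertex: "s = (2 * q * (1 - q)\<^sup>2) / (2 * (2 * q * peak_poly q))"
    unfolding s_def using assms(1) by simp
  have "ratio_f q tmax = 1 + q\<^sup>2 + ((2 * q * (1 - q)\<^sup>2) * s - (2 * q * peak_poly q) * s\<^sup>2)"
    using ratio_f_eq[OF t s_def] by simp
  also have "\<dots> = 1 + q\<^sup>2 + (2 * q * (1 - q)\<^sup>2)\<^sup>2 / (4 * (2 * q * peak_poly q))"
    unfolding vertex quadratic_at_vertex[OF a] ..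
  also have "\<dots> = 1 + q\<^sup>2 + q * (1 - q) ^ 4 / (2 * peak_poly q)"
    using assms(1) by (simp add: power_mult_distrib flip: power_mult) (simp add: power2_eq_square)
  finally show ?thesis unfolding tmax_def .
qed

lemma peak_value_eq:
  fixes q :: real
  defines "x \<equiv> q * (1 - q)\<^sup>2 / (2 * (1 + q ^ 4))" and "h \<equiv> (1 + q)\<^sup>2 / (2 * (1 + q\<^sup>2))"
  shows "(1 - h * x) / (1 - x) * (1 + q\<^sup>2) = 1 + q\<^sup>2 + q * (1 - q) ^ 4 / (2 * peak_poly q)"
proof -
  have d4: "1 + q ^ 4 \<noteq> 0" by (simp add: add_pos_nonneg less_imp_neq[symmetric])
  have d2: "1 + q\<^sup>2 \<noteq> 0" by (simp add: add_pos_nonneg less_imp_neq[symmetric])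
  have P: "peak_poly q \<noteq> 0" using peak_poly_pos by (simp add: less_le)
  have den: "1 - x = peak_poly q / (2 * (1 + q ^ 4))"
    unfolding x_def peak_poly_def using d4 by (simp add: field_simps eval_nat_numeral)
  have "(1 - h * x) * (1 + q\<^sup>2) = 1 + q\<^sup>2 - x * (1 + q)\<^sup>2 / 2"
    unfolding h_def using d2 by (simp add: field_simps)
  also have "\<dots> = (2 * (1 + q\<^sup>2) * peak_poly q + q * (1 - q) ^ 4) / (4 * (1 + q ^ 4))"
    unfolding x_def peak_poly_def using d4 by (simp add: field_simps eval_nat_numeral)
  finally have num: "(1 - h * x) * (1 + q\<^sup>2)
      = (2 * (1 + q\<^sup>2) * peak_poly q + q * (1 - q) ^ 4) / (4 * (1 + q ^ 4))" .
  have cancel_common_factor: "N / (4 * D) / (P / (2 * D)) = N / (2 * P)" if "D \<noteq> 0" for N D P :: real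
    using that by (simp add: divide_divide_eq_left divide_divide_eq_right mult.commute mult.left_commute)
  have "(1 - h * x) / (1 - x) * (1 + q\<^sup>2) = ((1 - h * x) * (1 + q\<^sup>2)) / (1 - x)" by simp
  also have "\<dots> = (2 * (1 + q\<^sup>2) * peak_poly q + q * (1 - q) ^ 4) / (2 * peak_poly q)"
    unfolding num den by (rule cancel_common_factor[OF d4])
  also have "\<dots> = 1 + q\<^sup>2 + q * (1 - q) ^ 4 / (2 * peak_poly q)"
    using P by (simp add: field_simps)
  finally show ?thesis .
qed

lemma frob_norm_qcomm_gt_if_ratio_f_gt:
  assumes "t \<ge> 0" and "ratio_f q t > c"
  shows "(frob_norm (qcomm q (matA q t) (matB q t)))\<^sup>2
    > c * (frob_norm (matA q t))\<^sup>2 * (frob_norm (matB q t))\<^sup>2"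
proof -
  have "(frob_norm (matA q t))\<^sup>2 * (frob_norm (matB q t))\<^sup>2 > 0"
    using assms(1) by (simp add: frob_norm_matA_power2 frob_norm_matB_power2 add_pos_nonneg)
  with assms(2) show ?thesis
    unfolding ratio_f_def by (simp add: pos_less_divide_eq mult.assoc)
qed

theorem mainTheorem4:
  fixes q :: real
  assumes "q > 0" and "q \<noteq> 1"
  shows "(\<forall>t::real. t \<ge> 0 \<longrightarrow>
            (frob_norm (qcomm q (matA q t) (matB q t)))\<^sup>2 =
              t\<^sup>2 * (1 + q\<^sup>2) + 2 * t * (1 + q) * (1 + q ^ 3) + (1 - q)\<^sup>2 * (1 + q ^ 4))
      \<and> (let tmax = (3 * q ^ 4 + 2 * q\<^sup>2 + 3) / (1 - q)\<^sup>2;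
             x = q * (1 - q)\<^sup>2 / (2 * (1 + q ^ 4));
             h = (1 + q)\<^sup>2 / (2 * (1 + q\<^sup>2))
         in tmax \<ge> 0
            \<and> (\<forall>t::real. t \<ge> 0 \<longrightarrow> ratio_f q t \<le> ratio_f q tmax)
            \<and> ratio_f q tmax = (1 - h * x) / (1 - x) * (1 + q\<^sup>2)
            \<and> ratio_f q tmax > 1 + q\<^sup>2)
      \<and> (\<exists>A B :: complex^2^2.
            (frob_norm (qcomm q A B))\<^sup>2 > (1 + q\<^sup>2) * (frob_norm A)\<^sup>2 * (frob_norm B)\<^sup>2)"
proof -
  define tmax where "tmax = (3 * q ^ 4 + 2 * q\<^sup>2 + 3) / (1 - q)\<^sup>2"
  define peak where "peak = 1 + q\<^sup>2 + q * (1 - q) ^ 4 / (2 * peak_poly q)"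
  have tmax_nonneg: "tmax \<ge> 0" unfolding tmax_def by simp
  have at_peak: "ratio_f q tmax = peak"
    unfolding tmax_def peak_def using assms by (simp add: ratio_f_at_peak)
  have le_peak: "ratio_f q t \<le> peak" if "t \<ge> 0" for t
    unfolding peak_def using ratio_f_le_peak assms(1) that .
  have peak_gt: "peak > 1 + q\<^sup>2"
    unfolding peak_def using assms peak_poly_pos[of q] by simp
  have "\<exists>A B :: complex^2^2.
      (frob_norm (qcomm q A B))\<^sup>2 > (1 + q\<^sup>2) * (frob_norm A)\<^sup>2 * (frob_norm B)\<^sup>2"
    using frob_norm_qcomm_gt_if_ratio_f_gt[OF tmax_nonneg] at_peak peak_gt by auto
  then show ?thesis
    unfolding Let_def tmax_def[symmetric]
    using frob_norm_qcomm_matA_matB_power2 tmax_nonneg le_peak at_peak peak_gt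
      peak_value_eq[of q, folded peak_def]
    by simp
qed

end
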